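(* Let $(\star)$ be a linear system over $\mathbb{F}_q$ ($q$ a prime power) with coefficient matrix $A\in\mathbb{F}_q^{m\times k}$ which is of type (RC), non-degenerate and irreducible. Let $j_1\ne j_2$ be indices in the same column equivalence class, and let $\{(x^{(i)}_1,\dots,x^{(i)}_k)\}_{i=1}^L$ be a list of pairwise disjoint solutions of $(\star)$ in $(\mathbb{F}_q^n)^k$. If $L\ge4q^k(\Gamma_q)^n$, then there exist $i\in[L]$ and a solution $(y_1,\dots,y_k)$ of $(\star)$ such that: (i) $y_j=x^{(i)}_j$ for all $j\ne j_1,j_2$, and $y_j\in\{x^{(1)}_j,\dots,x^{(L)}_j\}$ for $j\in\{j_1,j_2\}$; (ii) $\mathrm{Ann}_{\mathrm{bal}}(y_1,\dots,y_k)\subseteq\mathrm{Ann}_{\mathrm{bal}}(x^{(i)}_1,\dots,x^{(i)}_k)$; (iii) no $b\in\mathrm{Ann}_{\mathrm{bal}}(y_1,\dots,y_k)$ breaks the pair $\{j_1,j_2\}$.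
   Context: Solutions are tuples in $(\mathbb{F}_q^n)^k$ with $\sum_ja_{ij}x_j=0$ for all $i$. Two solutions $(x_j)$, $(y_j)$ are disjoint if $\{x_1,\dots,x_k\}\cap\{y_1,\dots,y_k\}=\varnothing$. Indices $j,j'$ are equivalent if columns $j,j'$ of $A$ are nonzero scalar multiples of one another; classes are column equivalence classes. A vector $b\in\mathbb{F}_q^k$ breaks the pair $\{j_1,j_2\}$ (two distinct indices in one class) if, after appending $b$ as an extra row to $A$, the columns $j_1,j_2$ are no longer scalar multiples of one another. $\mathrm{Ann}_{\mathrm{bal}}(x_1,\dots,x_k)=\{b\in\mathbb{F}_q^k:\sum_jb_jx_j=0,\ \sum_jb_j=0\}$. Type (RC): every row of $A$ sums to $0$ and at most one column equivalence class has size $1$. Non-degenerate: rows of $A$ linearly independent and no zero column. Irreducible: not equivalent (same row space) to a system whose variables split into at least two classes with each equation only using variables of one class. $\Gamma_q:=q\,J(q)$ where $J(t)=\frac1t\min_{0<x<1}\frac{1+x+\cdots+x^{t-1}}{x^{(t-1)/3}}$. *)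

theory Defs
  imports "HOL-Analysis.Analysis"
begin

(* A linear system: coefficient matrix A given as  A i j  for rows i < m and columns j < k,
   over a finite field 'a = F_q.  Vectors of F_q^n are elements of 'a ^ 'n, n = CARD('n). *)

definition is_solution ::
  "(nat \<Rightarrow> nat \<Rightarrow> 'a::field) \<Rightarrow> nat \<Rightarrow> nat \<Rightarrow> (nat \<Rightarrow> 'a ^ 'n) \<Rightarrow> bool" where
  "is_solution A m k x \<longleftrightarrow> (\<forall>i<m. (\<Sum>j<k. A i j *s x j) = 0)"

definition disjoint_sols :: "nat \<Rightarrow> (nat \<Rightarrow> 'b) \<Rightarrow> (nat \<Rightarrow> 'b) \<Rightarrow> bool" where
  "disjoint_sols k x y \<longleftrightarrow> (x ` {..<k}) \<inter> (y ` {..<k}) = {}"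

definition col_equiv :: "(nat \<Rightarrow> nat \<Rightarrow> 'a::field) \<Rightarrow> nat \<Rightarrow> nat \<Rightarrow> nat \<Rightarrow> bool" where
  "col_equiv A m j j' \<longleftrightarrow> (\<exists>c. c \<noteq> 0 \<and> (\<forall>i<m. A i j = c * A i j'))"

definition col_class :: "(nat \<Rightarrow> nat \<Rightarrow> 'a::field) \<Rightarrow> nat \<Rightarrow> nat \<Rightarrow> nat \<Rightarrow> nat set" where
  "col_class A m k j = {j'. j' < k \<and> col_equiv A m j j'}"

definition type_RC :: "(nat \<Rightarrow> nat \<Rightarrow> 'a::field) \<Rightarrow> nat \<Rightarrow> nat \<Rightarrow> bool" where
  "type_RC A m k \<longleftrightarrow>
     (\<forall>i<m. (\<Sum>j<k. A i j) = 0) \<and>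
     card {j. j < k \<and> card (col_class A m k j) = 1} \<le> 1"

definition non_degenerate :: "(nat \<Rightarrow> nat \<Rightarrow> 'a::field) \<Rightarrow> nat \<Rightarrow> nat \<Rightarrow> bool" where
  "non_degenerate A m k \<longleftrightarrow>
     (\<forall>c. (\<forall>j<k. (\<Sum>i<m. c i * A i j) = 0) \<longrightarrow> (\<forall>i<m. c i = 0)) \<and>
     (\<forall>j<k. \<exists>i<m. A i j \<noteq> 0)"

definition row_space :: "(nat \<Rightarrow> nat \<Rightarrow> 'a::field) \<Rightarrow> nat \<Rightarrow> nat \<Rightarrow> (nat \<Rightarrow> 'a) set" where
  "row_space A m k = {b. \<exists>c. \<forall>j. b j = (if j < k then (\<Sum>i<m. c i * A i j) else 0)}"

definition reducible :: "(nat \<Rightarrow> nat \<Rightarrow> 'a::field) \<Rightarrow> nat \<Rightarrow> nat \<Rightarrow> bool" where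
  "reducible A m k \<longleftrightarrow>
     (\<exists>(B :: nat \<Rightarrow> nat \<Rightarrow> 'a) m' P.
        row_space B m' k = row_space A m k \<and>
        (\<forall>C\<in>P. C \<noteq> {}) \<and> \<Union>P = {..<k} \<and>
        (\<forall>C\<in>P. \<forall>D\<in>P. C \<noteq> D \<longrightarrow> C \<inter> D = {}) \<and>
        2 \<le> card P \<and>
        (\<forall>i<m'. \<exists>C\<in>P. \<forall>j<k. j \<notin> C \<longrightarrow> B i j = 0))"

definition irreducible_sys :: "(nat \<Rightarrow> nat \<Rightarrow> 'a::field) \<Rightarrow> nat \<Rightarrow> nat \<Rightarrow> bool" where
  "irreducible_sys A m k \<longleftrightarrow> \<not> reducible A m k"

definition append_row :: "(nat \<Rightarrow> nat \<Rightarrow> 'a) \<Rightarrow> nat \<Rightarrow> (nat \<Rightarrow> 'a) \<Rightarrow> nat \<Rightarrow> nat \<Rightarrow> 'a" where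
  "append_row A m b = (\<lambda>i j. if i < m then A i j else b j)"

definition breaks :: "(nat \<Rightarrow> nat \<Rightarrow> 'a::field) \<Rightarrow> nat \<Rightarrow> nat \<Rightarrow> nat \<Rightarrow> (nat \<Rightarrow> 'a) \<Rightarrow> bool" where
  "breaks A m j1 j2 b \<longleftrightarrow> \<not> col_equiv (append_row A m b) (Suc m) j1 j2"

definition Ann_bal :: "nat \<Rightarrow> (nat \<Rightarrow> 'a::field ^ 'n) \<Rightarrow> (nat \<Rightarrow> 'a) set" where
  "Ann_bal k x = {b. (\<forall>j. k \<le> j \<longrightarrow> b j = 0) \<and> (\<Sum>j<k. b j *s x j) = 0 \<and> (\<Sum>j<k. b j) = 0}"

definition J_fun :: "nat \<Rightarrow> real" where
  "J_fun t = (1 / real t) *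
     (INF x\<in>{0<..<1::real}. (\<Sum>i<t. x ^ i) / x powr ((real t - 1) / 3))"

definition Gamma_q :: "nat \<Rightarrow> real" where
  "Gamma_q q = real q * J_fun q"

end

theory Submission
  imports Defs
begin

text \<open>
  Let column \<open>j1\<close> be \<open>c\<close> times column \<open>j2\<close>. If \<open>c x\<^sub>i\<^sub>1 j1 + x\<^sub>i\<^sub>2 j2 = c x\<^sub>i j1 + x\<^sub>i j2\<close>, then
  replacing the entries \<open>j1, j2\<close> of \<open>x\<^sub>i\<close> by \<open>x\<^sub>i\<^sub>1 j1, x\<^sub>i\<^sub>2 j2\<close> gives again a solution, and every
  balanced relation \<open>w\<close> of the new tuple satisfies \<open>w j1 = c w j2\<close> -- hence is a relation of \<open>x\<^sub>i\<close>
  and does not break the pair -- unless the shift \<open>x\<^sub>i\<^sub>1 j1 - x\<^sub>i j1\<close> lies in a set of at most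
  \<open>q\<^sup>k\<^sup>-\<^sup>1\<close> obstructions. If no swap works, joining \<open>i\<close> to the \<open>i\<^sub>1\<close> with obstructed shift gives a graph
  of out-degree at most \<open>q\<^sup>k\<^sup>-\<^sup>1\<close>, so there is an independent set of size \<open>L / (2 q\<^sup>k\<^sup>-\<^sup>1 + 1)\<close>.
  On it the triples \<open>(c x\<^sub>i j1, x\<^sub>i j2, -(c x\<^sub>i j1 + x\<^sub>i j2))\<close> form a tricolored sum-free set in
  \<open>F\<^sub>q\<^sup>n\<close>, which by the slice rank method has at most \<open>3 \<Gamma>\<^sub>q\<^sup>n\<close> elements; this contradicts
  \<open>L \<ge> 4 q\<^sup>k \<Gamma>\<^sub>q\<^sup>n\<close>.
\<close>

section \<open>The indicator of zero as a sum of monomials\<close>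

lemma finite_field_card_ge_2: "2 \<le> CARD('a::{finite,field})"
proof -
  have "card {0::'a, 1} \<le> CARD('a)"
    by (intro card_mono) auto
  then show ?thesis
    by simp
qed

lemma finite_field_power_card_minus_one:
  fixes z :: "'a::{finite,field}"
  assumes "z \<noteq> 0"
  shows "z ^ (CARD('a) - 1) = 1"
proof -
  let ?S = "UNIV - {0::'a}"
  have inj: "inj_on ((*) z) ?S"
    using assms by (auto simp: inj_on_def)
  have "(*) z ` ?S = ?S"
  proof
    show "?S \<subseteq> (*) z ` ?S"
    proof
      fix y assume "y \<in> ?S"
      then have "y = z * (y / z)" "y / z \<in> ?S"
        using assms by auto
      then show "y \<in> (*) z ` ?S"
        by blast
    qed
  qed (use assms in auto)
  then have "prod id ?S = prod ((*) z) ?S"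
    using prod.reindex[OF inj, of id] by simp
  also have "\<dots> = z ^ card ?S * prod id ?S"
    by (simp add: prod.distrib)
  finally have "prod id ?S = z ^ card ?S * prod id ?S" .
  moreover have "prod id ?S \<noteq> 0" "card ?S = CARD('a) - 1"
    by (simp_all add: card_Diff_subset)
  ultimately show ?thesis
    by simp
qed

lemma vec_zero_indicator:
  fixes s :: "'a::{finite,field} ^ 'n"
  shows "(if s = 0 then 1 else 0) = (\<Prod>t\<in>UNIV. 1 - (s $ t) ^ (CARD('a) - 1))"
proof -
  have "1 - (s $ t) ^ (CARD('a) - 1) = (if s $ t = 0 then 1 else 0)" for t
    using finite_field_power_card_minus_one[of "s $ t"] finite_field_card_ge_2[where 'a='a]
    by auto
  then show ?thesis
    by (auto simp: vec_eq_iff)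
qed

lemma one_minus_trinomial_power:
  obtains T :: "(nat \<times> nat \<times> nat) set" and \<kappa> :: "nat \<times> nat \<times> nat \<Rightarrow> 'a::comm_ring_1"
  where "finite T" "\<And>a b c. (a, b, c) \<in> T \<Longrightarrow> a + b + c \<le> Q"
    and "\<And>u v w. 1 - (u + v + w) ^ Q = (\<Sum>(a, b, c)\<in>T. \<kappa> (a, b, c) * u ^ a * v ^ b * w ^ c)"
proof
  define T where "T = {(a, b, c). a + b + c \<le> Q}"
  define T\<^sub>Q where "T\<^sub>Q = {(a, b, c). a + b + c = Q}"
  define \<mu> :: "nat \<times> nat \<times> nat \<Rightarrow> 'a"
    where "\<mu> = (\<lambda>(a, b, c). of_nat (Q choose a) * of_nat ((Q - a) choose b))"
  define \<kappa> where "\<kappa> t = (if t = (0, 0, 0) then 1 else 0) - (if t \<in> T\<^sub>Q then \<mu> t else 0)" for t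
  have fin: "finite T"
    by (rule finite_subset[of _ "{..Q} \<times> {..Q} \<times> {..Q}"]) (auto simp: T_def)
  then show "finite T" .
  show "a + b + c \<le> Q" if "(a, b, c) \<in> T" for a b c
    using that by (simp add: T_def)
  fix u v w :: 'a
  let ?mon = "\<lambda>(a, b, c). u ^ a * v ^ b * w ^ c"
  have bij: "bij_betw (\<lambda>(a, b). (a, b, Q - a - b)) (SIGMA a:{..Q}. {..Q - a}) T\<^sub>Q"
    by (rule bij_betw_byWitness[where f' = "\<lambda>(a, b, c). (a, b)"]) (auto simp: T\<^sub>Q_def)
  have "(u + v + w) ^ Q = (\<Sum>a\<le>Q. \<Sum>b\<le>Q - a. of_nat (Q choose a) * of_nat ((Q - a) choose b)
      * (u ^ a * v ^ b * w ^ (Q - a - b)))"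
    unfolding add.assoc binomial_ring[of u "v + w"]
    by (simp add: binomial_ring sum_distrib_left ac_simps)
  also have "\<dots> = (\<Sum>(a, b)\<in>(SIGMA a:{..Q}. {..Q - a}). \<mu> (a, b, Q - a - b) * ?mon (a, b, Q - a - b))"
    by (simp add: sum.Sigma \<mu>_def)
  also have "\<dots> = (\<Sum>t\<in>T\<^sub>Q. \<mu> t * ?mon t)"
    using sum.reindex_bij_betw[OF bij, of "\<lambda>t. \<mu> t * ?mon t"] by (simp add: case_prod_unfold)
  finally have expand: "(u + v + w) ^ Q = (\<Sum>t\<in>T\<^sub>Q. \<mu> t * ?mon t)" .
  have "(\<Sum>t\<in>T. \<kappa> t * ?mon t)
      = (\<Sum>t\<in>T. if t = (0, 0, 0) then 1 else 0) - (\<Sum>t\<in>T. if t \<in> T\<^sub>Q then \<mu> t * ?mon t else 0)"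
    unfolding sum_subtractf[symmetric] by (intro sum.cong) (auto simp: \<kappa>_def algebra_simps)
  also have "\<dots> = 1 - (u + v + w) ^ Q"
  proof -
    have "T \<inter> T\<^sub>Q = T\<^sub>Q" "(0, 0, 0) \<in> T"
      by (auto simp: T_def T\<^sub>Q_def)
    then show ?thesis
      using sum.inter_restrict[OF fin, of "\<lambda>t. \<mu> t * ?mon t" T\<^sub>Q] fin by (simp add: expand)
  qed
  finally show "1 - (u + v + w) ^ Q = (\<Sum>(a, b, c)\<in>T. \<kappa> (a, b, c) * u ^ a * v ^ b * w ^ c)"
    by (simp add: case_prod_unfold mult.assoc)
qed

definition vec_monomial :: "('n \<Rightarrow> nat) \<Rightarrow> 'a::comm_semiring_1 ^ 'n \<Rightarrow> 'a" where
  "vec_monomial e U = (\<Prod>t\<in>UNIV. (U $ t) ^ e t)"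

lemma vec_zero_indicator_expansion:
  obtains S :: "('n::finite \<Rightarrow> nat \<times> nat \<times> nat) set" and \<kappa> :: "('n \<Rightarrow> nat \<times> nat \<times> nat) \<Rightarrow> 'a::{finite,field}"
    and A B C :: "('n \<Rightarrow> nat \<times> nat \<times> nat) \<Rightarrow> 'n \<Rightarrow> nat"
  where "finite S" "\<And>\<sigma> t. \<sigma> \<in> S \<Longrightarrow> A \<sigma> t + B \<sigma> t + C \<sigma> t \<le> CARD('a) - 1"
    and "\<And>U V W :: 'a ^ 'n. (if U + V + W = 0 then 1 else 0)
           = (\<Sum>\<sigma>\<in>S. \<kappa> \<sigma> * vec_monomial (A \<sigma>) U * vec_monomial (B \<sigma>) V * vec_monomial (C \<sigma>) W)"
proof -
  obtain T and \<kappa> :: "nat \<times> nat \<times> nat \<Rightarrow> 'a"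
    where T: "finite T" "\<And>a b c. (a, b, c) \<in> T \<Longrightarrow> a + b + c \<le> CARD('a) - 1"
      and expand: "\<And>u v w. 1 - (u + v + w) ^ (CARD('a) - 1)
                      = (\<Sum>(a, b, c)\<in>T. \<kappa> (a, b, c) * u ^ a * v ^ b * w ^ c)"
    using one_minus_trinomial_power[where Q = "CARD('a) - 1"] by blast
  define A where "A \<sigma> t = fst (\<sigma> t)" for \<sigma> :: "'n \<Rightarrow> nat \<times> nat \<times> nat" and t
  define B where "B \<sigma> t = fst (snd (\<sigma> t))" for \<sigma> :: "'n \<Rightarrow> nat \<times> nat \<times> nat" and t
  define C where "C \<sigma> t = snd (snd (\<sigma> t))" for \<sigma> :: "'n \<Rightarrow> nat \<times> nat \<times> nat" and t
  define S where "S = (UNIV :: 'n set) \<rightarrow>\<^sub>E T"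
  show thesis
  proof (rule that[where S = S and \<kappa> = "\<lambda>\<sigma>. \<Prod>t\<in>UNIV. \<kappa> (\<sigma> t)"
        and A = A and B = B and C = C])
    show "finite S"
      using T(1) by (simp add: S_def finite_PiE)
    show "A \<sigma> t + B \<sigma> t + C \<sigma> t \<le> CARD('a) - 1" if "\<sigma> \<in> S" for \<sigma> t
      using that T(2)[of "fst (\<sigma> t)" "fst (snd (\<sigma> t))" "snd (snd (\<sigma> t))"]
      by (auto simp: S_def A_def B_def C_def)
    fix U V W :: "'a ^ 'n"
    have "(if U + V + W = 0 then 1 else 0) = (\<Prod>t\<in>UNIV. 1 - ((U + V + W) $ t) ^ (CARD('a) - 1))"
      by (rule vec_zero_indicator)
    also have "\<dots> = (\<Prod>t\<in>UNIV. \<Sum>\<tau>\<in>T. \<kappa> \<tau> * (U $ t) ^ fst \<tau> * (V $ t) ^ fst (snd \<tau>) * (W $ t) ^ snd (snd \<tau>))"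
      unfolding vector_add_component expand by (simp add: case_prod_unfold)
    also have "\<dots> = (\<Sum>\<sigma>\<in>S. \<Prod>t\<in>UNIV.
        \<kappa> (\<sigma> t) * (U $ t) ^ A \<sigma> t * (V $ t) ^ B \<sigma> t * (W $ t) ^ C \<sigma> t)"
      unfolding S_def A_def B_def C_def by (rule prod_sum_PiE) (simp_all add: T(1))
    also have "\<dots> = (\<Sum>\<sigma>\<in>S. (\<Prod>t\<in>UNIV. \<kappa> (\<sigma> t))
        * vec_monomial (A \<sigma>) U * vec_monomial (B \<sigma>) V * vec_monomial (C \<sigma>) W)"
      by (simp add: vec_monomial_def prod.distrib)
    finally show "(if U + V + W = 0 then 1 else 0) = (\<Sum>\<sigma>\<in>S. (\<Prod>t\<in>UNIV. \<kappa> (\<sigma> t))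
        * vec_monomial (A \<sigma>) U * vec_monomial (B \<sigma>) V * vec_monomial (C \<sigma>) W)" .
  qed
qed

lemma sum_group_by_image:
  fixes f :: "'s \<Rightarrow> 'a::comm_semiring_1"
  assumes "finite S"
  shows "(\<Sum>\<sigma>\<in>S. g (A \<sigma>) * f \<sigma>) = (\<Sum>e\<in>A ` S. g e * (\<Sum>\<sigma>\<in>{\<sigma>\<in>S. A \<sigma> = e}. f \<sigma>))"
  using sum.image_gen[OF assms, of "\<lambda>\<sigma>. g (A \<sigma>) * f \<sigma>" A]
  by (simp add: sum_distrib_left)

text \<open>Each term is charged to the first of its three factors whose exponent satisfies \<open>P\<close>;
  the last slice contains the terms charged to none of the first two.\<close>

lemma sum_slice_decomposition:
  fixes \<kappa> :: "'s \<Rightarrow> 'a::comm_semiring_1" and g :: "'e \<Rightarrow> 'v \<Rightarrow> 'a"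
  assumes "finite S"
  obtains G1 G2 G3 where "\<And>U V W. (\<Sum>\<sigma>\<in>S. \<kappa> \<sigma> * g (A \<sigma>) U * g (B \<sigma>) V * g (C \<sigma>) W)
     = (\<Sum>e\<in>A ` {\<sigma>\<in>S. P (A \<sigma>)}. g e U * G1 e V W)
     + (\<Sum>e\<in>B ` {\<sigma>\<in>S. \<not> P (A \<sigma>) \<and> P (B \<sigma>)}. g e V * G2 e U W)
     + (\<Sum>e\<in>C ` {\<sigma>\<in>S. \<not> P (A \<sigma>) \<and> \<not> P (B \<sigma>)}. g e W * G3 e U V)"
proof
  define S1 where "S1 = {\<sigma>\<in>S. P (A \<sigma>)}"
  define S2 where "S2 = {\<sigma>\<in>S. \<not> P (A \<sigma>) \<and> P (B \<sigma>)}"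
  define S3 where "S3 = {\<sigma>\<in>S. \<not> P (A \<sigma>) \<and> \<not> P (B \<sigma>)}"
  have fin: "finite S1" "finite S2" "finite S3"
    using assms by (auto simp: S1_def S2_def S3_def)
  fix U V W
  let ?f = "\<lambda>\<sigma>. \<kappa> \<sigma> * g (A \<sigma>) U * g (B \<sigma>) V * g (C \<sigma>) W"
  have S: "S = S1 \<union> S2 \<union> S3" and disj: "(S1 \<union> S2) \<inter> S3 = {}" "S1 \<inter> S2 = {}"
    by (auto simp: S1_def S2_def S3_def)
  have "(\<Sum>\<sigma>\<in>S. ?f \<sigma>) = (\<Sum>\<sigma>\<in>S1. ?f \<sigma>) + (\<Sum>\<sigma>\<in>S2. ?f \<sigma>) + (\<Sum>\<sigma>\<in>S3. ?f \<sigma>)"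
    unfolding S using fin disj by (simp add: sum.union_disjoint)
  also have "(\<Sum>\<sigma>\<in>S1. ?f \<sigma>) = (\<Sum>e\<in>A ` S1. g e U *
      (\<Sum>\<sigma>\<in>{\<sigma>\<in>S1. A \<sigma> = e}. \<kappa> \<sigma> * g (B \<sigma>) V * g (C \<sigma>) W))"
    using sum_group_by_image[OF fin(1), where g = "\<lambda>e. g e U" and A = A
        and f = "\<lambda>\<sigma>. \<kappa> \<sigma> * g (B \<sigma>) V * g (C \<sigma>) W"] by (simp add: ac_simps)
  also have "(\<Sum>\<sigma>\<in>S2. ?f \<sigma>) = (\<Sum>e\<in>B ` S2. g e V *
      (\<Sum>\<sigma>\<in>{\<sigma>\<in>S2. B \<sigma> = e}. \<kappa> \<sigma> * g (A \<sigma>) U * g (C \<sigma>) W))"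
    using sum_group_by_image[OF fin(2), where g = "\<lambda>e. g e V" and A = B
        and f = "\<lambda>\<sigma>. \<kappa> \<sigma> * g (A \<sigma>) U * g (C \<sigma>) W"] by (simp add: ac_simps)
  also have "(\<Sum>\<sigma>\<in>S3. ?f \<sigma>) = (\<Sum>e\<in>C ` S3. g e W *
      (\<Sum>\<sigma>\<in>{\<sigma>\<in>S3. C \<sigma> = e}. \<kappa> \<sigma> * g (A \<sigma>) U * g (B \<sigma>) V))"
    using sum_group_by_image[OF fin(3), where g = "\<lambda>e. g e W" and A = C
        and f = "\<lambda>\<sigma>. \<kappa> \<sigma> * g (A \<sigma>) U * g (B \<sigma>) V"] by (simp add: ac_simps)
  finally show "(\<Sum>\<sigma>\<in>S. ?f \<sigma>)
     = (\<Sum>e\<in>A ` {\<sigma>\<in>S. P (A \<sigma>)}. g e U * (\<lambda>e V W. \<Sum>\<sigma>\<in>{\<sigma>\<in>S1. A \<sigma> = e}. \<kappa> \<sigma> * g (B \<sigma>) V * g (C \<sigma>) W) e V W)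
     + (\<Sum>e\<in>B ` {\<sigma>\<in>S. \<not> P (A \<sigma>) \<and> P (B \<sigma>)}. g e V * (\<lambda>e U W. \<Sum>\<sigma>\<in>{\<sigma>\<in>S2. B \<sigma> = e}. \<kappa> \<sigma> * g (A \<sigma>) U * g (C \<sigma>) W) e U W)
     + (\<Sum>e\<in>C ` {\<sigma>\<in>S. \<not> P (A \<sigma>) \<and> \<not> P (B \<sigma>)}. g e W * (\<lambda>e U V. \<Sum>\<sigma>\<in>{\<sigma>\<in>S3. C \<sigma> = e}. \<kappa> \<sigma> * g (A \<sigma>) U * g (B \<sigma>) V) e U V)"
    by (simp add: S1_def S2_def S3_def)
qed

section \<open>Slice rank of the diagonal tensor\<close>

text \<open>Counting form of rank--nullity for the linear map \<open>h \<mapsto> (\<Sum>z\<in>I. h z * f s z)\<^sub>s\<^sub>\<in>\<^sub>R\<close>: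
  a function is determined by its image and its residue modulo a fixed section of the map.\<close>

lemma card_functions_le_annihilator:
  fixes f :: "'s \<Rightarrow> 'i \<Rightarrow> 'a::{finite,field}"
  assumes I: "finite I" and R: "finite R"
  shows "CARD('a) ^ card I
    \<le> card {h \<in> I \<rightarrow>\<^sub>E UNIV. \<forall>s\<in>R. (\<Sum>z\<in>I. h z * f s z) = 0} * CARD('a) ^ card R"
proof -
  define W where "W = {h \<in> I \<rightarrow>\<^sub>E (UNIV :: 'a set). \<forall>s\<in>R. (\<Sum>z\<in>I. h z * f s z) = 0}"
  define \<Lambda> where "\<Lambda> h = restrict (\<lambda>s. \<Sum>z\<in>I. h z * f s z) R" for h
  define sec where "sec v = (SOME h. h \<in> I \<rightarrow>\<^sub>E UNIV \<and> \<Lambda> h = v)" for v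
  define \<phi> where "\<phi> h = (restrict (\<lambda>z. h z - sec (\<Lambda> h) z) I, \<Lambda> h)" for h
  have sec: "sec (\<Lambda> h) \<in> I \<rightarrow>\<^sub>E UNIV" "\<Lambda> (sec (\<Lambda> h)) = \<Lambda> h" if "h \<in> I \<rightarrow>\<^sub>E UNIV" for h
    using someI[of "\<lambda>h'. h' \<in> I \<rightarrow>\<^sub>E UNIV \<and> \<Lambda> h' = \<Lambda> h" h] that by (auto simp: sec_def)
  have "inj_on \<phi> (I \<rightarrow>\<^sub>E UNIV)"
  proof (rule inj_onI)
    fix h1 h2 assume h: "h1 \<in> I \<rightarrow>\<^sub>E UNIV" "h2 \<in> I \<rightarrow>\<^sub>E UNIV" "\<phi> h1 = \<phi> h2"
    then have \<Lambda>: "\<Lambda> h1 = \<Lambda> h2"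
      and residue: "restrict (\<lambda>z. h1 z - sec (\<Lambda> h1) z) I = restrict (\<lambda>z. h2 z - sec (\<Lambda> h2) z) I"
      using h(3) unfolding \<phi>_def prod.inject by blast+
    have "h1 z = h2 z" if "z \<in> I" for z
      using fun_cong[OF residue, of z] \<Lambda> that by simp
    then show "h1 = h2"
      using h(1,2) by (intro PiE_ext) auto
  qed
  moreover have "\<phi> ` (I \<rightarrow>\<^sub>E UNIV) \<subseteq> W \<times> (R \<rightarrow>\<^sub>E UNIV)"
  proof (rule image_subsetI)
    fix h :: "'i \<Rightarrow> 'a" assume h: "h \<in> I \<rightarrow>\<^sub>E UNIV"
    have "(\<Sum>z\<in>I. (h z - sec (\<Lambda> h) z) * f s z) = 0" if "s \<in> R" for s
      using fun_cong[OF sec(2)[OF h], of s] that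
      by (simp add: \<Lambda>_def left_diff_distrib sum_subtractf)
    then show "\<phi> h \<in> W \<times> (R \<rightarrow>\<^sub>E UNIV)"
      by (simp add: \<phi>_def W_def \<Lambda>_def)
  qed
  moreover have "finite (W \<times> (R \<rightarrow>\<^sub>E (UNIV :: 'a set)))"
    using I R by (simp add: W_def finite_PiE)
  ultimately have "card (I \<rightarrow>\<^sub>E (UNIV :: 'a set)) \<le> card (W \<times> (R \<rightarrow>\<^sub>E (UNIV :: 'a set)))"
    by (rule card_inj_on_le)
  then show ?thesis
    using I R by (simp add: W_def card_cartesian_product card_PiE)
qed

text \<open>Two elements of \<open>W\<close> agreeing on a support of maximal size are equal: otherwise adding their
  difference would enlarge that support.\<close>

lemma exists_support_dominating_card:
  fixes W :: "('i \<Rightarrow> 'a::{finite,ab_group_add}) set"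
  assumes I: "finite I" and W: "W \<subseteq> I \<rightarrow>\<^sub>E UNIV" "W \<noteq> {}"
    and closed: "\<And>h h' h''. h \<in> W \<Longrightarrow> h' \<in> W \<Longrightarrow> h'' \<in> W
      \<Longrightarrow> restrict (\<lambda>z. h z + (h' z - h'' z)) I \<in> W"
  obtains h where "h \<in> W" "card W \<le> CARD('a) ^ card {z\<in>I. h z \<noteq> 0}"
proof -
  let ?supp = "\<lambda>h. {z\<in>I. h z \<noteq> (0::'a)}"
  have finW: "finite W"
    using I W(1) finite_PiE[of I "\<lambda>_. UNIV :: 'a set"] finite_subset by auto
  obtain h where h: "h \<in> W" and max: "\<And>h'. h' \<in> W \<Longrightarrow> card (?supp h') \<le> card (?supp h)"
    using finW W(2) Max_in[of "(\<lambda>h. card (?supp h)) ` W"] Max_ge[of "(\<lambda>h. card (?supp h)) ` W"]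
    by fastforce
  have "inj_on (\<lambda>h'. restrict h' (?supp h)) W"
  proof (rule inj_onI, rule ccontr)
    fix h1 h2 assume h12: "h1 \<in> W" "h2 \<in> W" "restrict h1 (?supp h) = restrict h2 (?supp h)" "h1 \<noteq> h2"
    have "h1 \<in> I \<rightarrow>\<^sub>E UNIV" "h2 \<in> I \<rightarrow>\<^sub>E UNIV"
      using W(1) h12(1,2) by auto
    then obtain x where x: "x \<in> I" "h1 x \<noteq> h2 x"
      using h12(4) PiE_ext[of h1 I _ h2] by blast
    then have x_out: "x \<notin> ?supp h"
      using fun_cong[OF h12(3), of x] by (auto split: if_splits)
    define h' where "h' = restrict (\<lambda>z. h z + (h1 z - h2 z)) I"
    have "h1 z = h2 z" if "z \<in> ?supp h" for z
      using fun_cong[OF h12(3), of z] that by simp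
    then have "insert x (?supp h) \<subseteq> ?supp h'"
      using x x_out by (auto simp: h'_def)
    then have "card (insert x (?supp h)) \<le> card (?supp h')"
      using I by (intro card_mono) auto
    then show False
      using x_out max[of h'] closed[OF h h12(1,2)] I by (simp add: h'_def)
  qed
  moreover have "(\<lambda>h'. restrict h' (?supp h)) ` W \<subseteq> ?supp h \<rightarrow>\<^sub>E UNIV"
    by (intro image_subsetI restrict_PiE) simp
  moreover have "finite (?supp h \<rightarrow>\<^sub>E (UNIV :: 'a set))"
    using I by (simp add: finite_PiE)
  ultimately have "card W \<le> card (?supp h \<rightarrow>\<^sub>E (UNIV :: 'a set))"
    by (rule card_inj_on_le)
  with h that show thesis
    using I by (simp add: card_PiE)
qed

lemma card_support_le_of_diagonal_decomposition:
  fixes h :: "'i \<Rightarrow> 'a::{finite,field}"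
    and f1 :: "'s1 \<Rightarrow> 'i \<Rightarrow> 'a" and f2 :: "'s2 \<Rightarrow> 'i \<Rightarrow> 'a"
  assumes I: "finite I" and R: "finite R1" "finite R2"
    and dec: "\<And>x y. x \<in> I \<Longrightarrow> y \<in> I \<Longrightarrow>
      (if x = y then h x else 0) = (\<Sum>s\<in>R1. f1 s x * g1 s y) + (\<Sum>s\<in>R2. f2 s x * g2 s y)"
  shows "card {x\<in>I. h x \<noteq> 0} \<le> card R1 + card R2"
proof -
  define S where "S = {x\<in>I. h x \<noteq> 0}"
  define extend where "extend v = restrict (\<lambda>x. if x \<in> S then v x else 0) I" for v :: "'i \<Rightarrow> 'a"
  define combine where "combine p = restrict (\<lambda>x. (\<Sum>s\<in>R1. f1 s x * fst p s) + (\<Sum>s\<in>R2. f2 s x * snd p s)) I"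
    for p :: "('s1 \<Rightarrow> 'a) \<times> ('s2 \<Rightarrow> 'a)"
  have "inj_on extend (S \<rightarrow>\<^sub>E UNIV)"
  proof (rule inj_onI)
    fix v1 v2 assume v: "v1 \<in> S \<rightarrow>\<^sub>E UNIV" "v2 \<in> S \<rightarrow>\<^sub>E UNIV" "extend v1 = extend v2"
    have "v1 x = v2 x" if "x \<in> S" for x
      using fun_cong[OF v(3), of x] that by (simp add: extend_def S_def)
    then show "v1 = v2"
      using v(1,2) by (intro PiE_ext) auto
  qed
  moreover have "extend ` (S \<rightarrow>\<^sub>E UNIV) \<subseteq> combine ` ((R1 \<rightarrow>\<^sub>E UNIV) \<times> (R2 \<rightarrow>\<^sub>E UNIV))"
  proof (rule image_subsetI)
    fix v :: "'i \<Rightarrow> 'a"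
    define w where "w y = (if y \<in> S then v y / h y else 0)" for y
    define \<alpha> where "\<alpha> = restrict (\<lambda>s. \<Sum>y\<in>I. g1 s y * w y) R1"
    define \<beta> where "\<beta> = restrict (\<lambda>s. \<Sum>y\<in>I. g2 s y * w y) R2"
    have "extend v x = combine (\<alpha>, \<beta>) x" if x: "x \<in> I" for x
    proof -
      have "(if x \<in> S then v x else 0) = (\<Sum>y\<in>I. (if x = y then h x else 0) * w y)"
        using I x by (simp add: w_def S_def if_distrib[of "\<lambda>c. c * _"] cong: if_cong)
      also have "\<dots> = (\<Sum>y\<in>I. ((\<Sum>s\<in>R1. f1 s x * g1 s y) + (\<Sum>s\<in>R2. f2 s x * g2 s y)) * w y)"
        using dec x by (intro sum.cong) auto
      also have "\<dots> = (\<Sum>s\<in>R1. f1 s x * \<alpha> s) + (\<Sum>s\<in>R2. f2 s x * \<beta> s)"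
        by (simp add: \<alpha>_def \<beta>_def algebra_simps sum.distrib sum_distrib_left sum_distrib_right
            sum.swap[of _ I])
      finally show ?thesis
        using x by (simp add: extend_def combine_def)
    qed
    then have "extend v = combine (\<alpha>, \<beta>)"
      by (auto simp: extend_def combine_def)
    then show "extend v \<in> combine ` ((R1 \<rightarrow>\<^sub>E UNIV) \<times> (R2 \<rightarrow>\<^sub>E UNIV))"
      by (auto simp: \<alpha>_def \<beta>_def)
  qed
  moreover have "finite ((R1 \<rightarrow>\<^sub>E (UNIV :: 'a set)) \<times> (R2 \<rightarrow>\<^sub>E (UNIV :: 'a set)))"
    using R by (simp add: finite_PiE)
  ultimately have "card (S \<rightarrow>\<^sub>E (UNIV :: 'a set)) \<le> card ((R1 \<rightarrow>\<^sub>E (UNIV :: 'a set)) \<times> (R2 \<rightarrow>\<^sub>E (UNIV :: 'a set)))"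
    by (meson card_image_le card_inj_on_le finite_imageI order_trans)
  then have "CARD('a) ^ card S \<le> CARD('a) ^ (card R1 + card R2)"
    using I R by (simp add: S_def card_PiE card_cartesian_product power_add)
  then show ?thesis
    using finite_field_card_ge_2[where 'a = 'a] by (simp add: S_def)
qed

lemma slice_rank_diagonal_bound:
  fixes f1 :: "'s1 \<Rightarrow> 'i \<Rightarrow> 'a::{finite,field}" and f2 :: "'s2 \<Rightarrow> 'i \<Rightarrow> 'a"
    and f3 :: "'s3 \<Rightarrow> 'i \<Rightarrow> 'a"
  assumes I: "finite I" and R: "finite R1" "finite R2" "finite R3"
    and dec: "\<And>x y z. x \<in> I \<Longrightarrow> y \<in> I \<Longrightarrow> z \<in> I \<Longrightarrow>
       (if x = y \<and> y = z then 1 else 0) =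
       (\<Sum>s\<in>R1. f1 s x * g1 s y z) + (\<Sum>s\<in>R2. f2 s y * g2 s x z) + (\<Sum>s\<in>R3. f3 s z * g3 s x y)"
  shows "card I \<le> card R1 + card R2 + card R3"
proof -
  define W where "W = {h \<in> I \<rightarrow>\<^sub>E (UNIV :: 'a set). \<forall>s\<in>R3. (\<Sum>z\<in>I. h z * f3 s z) = 0}"
  have W_closed: "restrict (\<lambda>z. h z + (h' z - h'' z)) I \<in> W" if "h \<in> W" "h' \<in> W" "h'' \<in> W" for h h' h''
    using that by (simp add: W_def algebra_simps sum.distrib sum_subtractf)
  have "restrict (\<lambda>_. 0) I \<in> W"
    by (simp add: W_def)
  moreover have "W \<subseteq> I \<rightarrow>\<^sub>E UNIV"
    by (auto simp: W_def)
  ultimately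
  obtain h where h: "h \<in> W" and card_W: "card W \<le> CARD('a) ^ card {z\<in>I. h z \<noteq> 0}"
    using exists_support_dominating_card[OF I _ _ W_closed] by blast
  have "card {z\<in>I. h z \<noteq> 0} \<le> card R1 + card R2"
  proof (rule card_support_le_of_diagonal_decomposition[OF I R(1,2)])
    fix x y assume xy: "x \<in> I" "y \<in> I"
    have "(if x = y then h x else 0) = (\<Sum>z\<in>I. (if x = y \<and> y = z then 1 else 0) * h z)"
      using I xy by (simp add: if_distrib[of "\<lambda>c. c * _"] cong: if_cong)
    also have "\<dots> = (\<Sum>s\<in>R1. f1 s x * (\<Sum>z\<in>I. g1 s y z * h z)) + (\<Sum>s\<in>R2. (\<Sum>z\<in>I. g2 s x z * h z) * f2 s y)
        + (\<Sum>s\<in>R3. (\<Sum>z\<in>I. h z * f3 s z) * g3 s x y)"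
      using dec xy
      by (simp add: algebra_simps sum.distrib sum_distrib_left sum_distrib_right sum.swap[of _ I])
    also have "(\<Sum>s\<in>R3. (\<Sum>z\<in>I. h z * f3 s z) * g3 s x y) = 0"
      using h by (simp add: W_def)
    finally show "(if x = y then h x else 0) = (\<Sum>s\<in>R1. f1 s x * (\<Sum>z\<in>I. g1 s y z * h z))
        + (\<Sum>s\<in>R2. (\<Sum>z\<in>I. g2 s x z * h z) * f2 s y)"
      by simp
  qed
  then have "CARD('a) ^ card {z\<in>I. h z \<noteq> 0} \<le> CARD('a) ^ (card R1 + card R2)"
    using finite_field_card_ge_2[where 'a = 'a] by (intro power_increasing) auto
  then have "CARD('a) ^ card I \<le> CARD('a) ^ (card R1 + card R2) * CARD('a) ^ card R3"
    using card_functions_le_annihilator[OF I R(3), of f3] card_W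
    by (metis (no_types, lifting) W_def dual_order.trans mult_le_mono1)
  then show ?thesis
    using finite_field_card_ge_2[where 'a = 'a] by (simp add: power_add[symmetric])
qed

section \<open>Tricolored sum-free sets\<close>

definition low_exponents :: "nat \<Rightarrow> ('n::finite \<Rightarrow> nat) set" where
  "low_exponents q = {e \<in> UNIV \<rightarrow>\<^sub>E {..<q}. 3 * sum e UNIV \<le> (q - 1) * CARD('n)}"

lemma finite_low_exponents: "finite (low_exponents q)"
  by (rule finite_subset[of _ "UNIV \<rightarrow>\<^sub>E {..<q}"]) (auto simp: low_exponents_def finite_PiE)

lemma card_low_exponents_pos: "0 < q \<Longrightarrow> 0 < card (low_exponents q :: ('n::finite \<Rightarrow> nat) set)"
  using finite_low_exponents[of q] card_gt_0_iff[of "low_exponents q :: ('n \<Rightarrow> nat) set"]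
  by (force simp: low_exponents_def)

lemma tricolored_sum_free_card_le:
  fixes \<alpha> \<beta> \<gamma> :: "'i \<Rightarrow> 'a::{finite,field} ^ 'n"
  assumes I: "finite I"
    and sum_free: "\<And>x y z. x \<in> I \<Longrightarrow> y \<in> I \<Longrightarrow> z \<in> I \<Longrightarrow> \<alpha> x + \<beta> y + \<gamma> z = 0 \<longleftrightarrow> x = y \<and> y = z"
  shows "card I \<le> 3 * card (low_exponents CARD('a) :: ('n \<Rightarrow> nat) set)"
proof -
  define M where "M = (low_exponents CARD('a) :: ('n \<Rightarrow> nat) set)"
  obtain S :: "('n \<Rightarrow> nat \<times> nat \<times> nat) set" and \<kappa> :: "_ \<Rightarrow> 'a" and A B C where S: "finite S"
    and deg: "\<And>\<sigma> t. \<sigma> \<in> S \<Longrightarrow> A \<sigma> t + B \<sigma> t + C \<sigma> t \<le> CARD('a) - 1"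
    and expand: "\<And>U V W :: 'a ^ 'n. (if U + V + W = 0 then 1 else 0)
      = (\<Sum>\<sigma>\<in>S. \<kappa> \<sigma> * vec_monomial (A \<sigma>) U * vec_monomial (B \<sigma>) V * vec_monomial (C \<sigma>) W)"
    by (rule vec_zero_indicator_expansion[where 'a = 'a]) (rule that)
  obtain G1 G2 G3 where slices: "\<And>U V W. (\<Sum>\<sigma>\<in>S. \<kappa> \<sigma> * vec_monomial (A \<sigma>) U * vec_monomial (B \<sigma>) V * vec_monomial (C \<sigma>) W)
     = (\<Sum>e\<in>A ` {\<sigma>\<in>S. A \<sigma> \<in> M}. vec_monomial e U * G1 e V W)
     + (\<Sum>e\<in>B ` {\<sigma>\<in>S. A \<sigma> \<notin> M \<and> B \<sigma> \<in> M}. vec_monomial e V * G2 e U W)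
     + (\<Sum>e\<in>C ` {\<sigma>\<in>S. A \<sigma> \<notin> M \<and> B \<sigma> \<notin> M}. vec_monomial e W * G3 e U V)"
    by (rule sum_slice_decomposition[OF S]) (rule that)
  define R1 where "R1 = A ` {\<sigma>\<in>S. A \<sigma> \<in> M}"
  define R2 where "R2 = B ` {\<sigma>\<in>S. A \<sigma> \<notin> M \<and> B \<sigma> \<in> M}"
  define R3 where "R3 = C ` {\<sigma>\<in>S. A \<sigma> \<notin> M \<and> B \<sigma> \<notin> M}"
  have "C \<sigma> \<in> M" if \<sigma>: "\<sigma> \<in> S" "A \<sigma> \<notin> M" "B \<sigma> \<notin> M" for \<sigma>
  proof -
    have "A \<sigma> t < CARD('a)" "B \<sigma> t < CARD('a)" "C \<sigma> t < CARD('a)" for t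
      using deg[OF \<sigma>(1), of t] finite_field_card_ge_2[where 'a = 'a] by linarith+
    then have "\<not> 3 * sum (A \<sigma>) UNIV \<le> (CARD('a) - 1) * CARD('n)"
      "\<not> 3 * sum (B \<sigma>) UNIV \<le> (CARD('a) - 1) * CARD('n)" "C \<sigma> \<in> UNIV \<rightarrow>\<^sub>E {..<CARD('a)}"
      using \<sigma>(2,3) by (auto simp: M_def low_exponents_def PiE_iff)
    moreover have "(\<Sum>t\<in>UNIV. A \<sigma> t + B \<sigma> t + C \<sigma> t) \<le> (\<Sum>t\<in>(UNIV :: 'n set). CARD('a) - 1)"
      using deg[OF \<sigma>(1)] by (intro sum_mono) auto
    ultimately show ?thesis
      by (simp add: M_def low_exponents_def sum.distrib mult.commute)
  qed
  then have R_low: "R1 \<subseteq> M" "R2 \<subseteq> M" "R3 \<subseteq> M"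
    unfolding R1_def R2_def R3_def by blast+
  have "card I \<le> card R1 + card R2 + card R3"
  proof (rule slice_rank_diagonal_bound[where ?f1.0 = "\<lambda>e x. vec_monomial e (\<alpha> x)"
        and ?g1.0 = "\<lambda>e y z. G1 e (\<beta> y) (\<gamma> z)" and ?f2.0 = "\<lambda>e y. vec_monomial e (\<beta> y)"
        and ?g2.0 = "\<lambda>e x z. G2 e (\<alpha> x) (\<gamma> z)" and ?f3.0 = "\<lambda>e z. vec_monomial e (\<gamma> z)"
        and ?g3.0 = "\<lambda>e x y. G3 e (\<alpha> x) (\<beta> y)"])
    show "finite R1" "finite R2" "finite R3"
      using R_low finite_low_exponents finite_subset unfolding M_def by blast+
    fix x y z assume "x \<in> I" "y \<in> I" "z \<in> I"
    then have "(if x = y \<and> y = z then 1 else 0) = (if \<alpha> x + \<beta> y + \<gamma> z = 0 then 1 else (0::'a))"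
      using sum_free by simp
    also have "\<dots> = (\<Sum>e\<in>R1. vec_monomial e (\<alpha> x) * G1 e (\<beta> y) (\<gamma> z))
      + (\<Sum>e\<in>R2. vec_monomial e (\<beta> y) * G2 e (\<alpha> x) (\<gamma> z))
      + (\<Sum>e\<in>R3. vec_monomial e (\<gamma> z) * G3 e (\<alpha> x) (\<beta> y))"
      unfolding expand slices R1_def R2_def R3_def ..
    finally show "(if x = y \<and> y = z then 1 else 0)
      = (\<Sum>e\<in>R1. vec_monomial e (\<alpha> x) * G1 e (\<beta> y) (\<gamma> z))
      + (\<Sum>e\<in>R2. vec_monomial e (\<beta> y) * G2 e (\<alpha> x) (\<gamma> z))
      + (\<Sum>e\<in>R3. vec_monomial e (\<gamma> z) * G3 e (\<alpha> x) (\<beta> y))" .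
  qed (rule I)
  also have "\<dots> \<le> 3 * card M"
    using card_mono[OF _ R_low(1)] card_mono[OF _ R_low(2)] card_mono[OF _ R_low(3)]
    by (simp add: M_def finite_low_exponents)
  finally show ?thesis
    by (simp add: M_def)
qed

text \<open>A Chernoff-type bound: on low exponents \<open>x ^ sum e UNIV \<ge> x powr ((q - 1) * CARD('n) / 3)\<close>,
  while the sum of \<open>x ^ sum e UNIV\<close> over all of \<open>UNIV \<rightarrow>\<^sub>E {..<q}\<close> factorizes.\<close>

lemma card_low_exponents_le:
  fixes x :: real
  assumes x: "0 < x" "x < 1" and q: "1 \<le> q"
  shows "real (card (low_exponents q :: ('n::finite \<Rightarrow> nat) set))
    \<le> ((\<Sum>i<q. x ^ i) / x powr ((real q - 1) / 3)) ^ CARD('n)"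
proof -
  define P where "P = (UNIV :: 'n set) \<rightarrow>\<^sub>E {..<q}"
  define M where "M = (low_exponents q :: ('n \<Rightarrow> nat) set)"
  define d where "d = real CARD('n) * ((real q - 1) / 3)"
  have "(\<Sum>e\<in>P. x ^ sum e UNIV) = (\<Sum>e\<in>P. \<Prod>t\<in>UNIV. x ^ e t)"
    by (simp add: power_sum)
  also have "\<dots> = (\<Prod>t\<in>(UNIV :: 'n set). \<Sum>i<q. x ^ i)"
    unfolding P_def by (rule prod_sum_PiE[symmetric]) auto
  also have "\<dots> = (\<Sum>i<q. x ^ i) ^ CARD('n)"
    by simp
  finally have total: "(\<Sum>e\<in>P. x ^ sum e UNIV) = (\<Sum>i<q. x ^ i) ^ CARD('n)" .
  have "x powr d \<le> x ^ sum e UNIV" if "e \<in> M" for e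
  proof -
    have "real (3 * sum e UNIV) \<le> real ((q - 1) * CARD('n))"
      using that by (simp only: of_nat_le_iff) (simp add: M_def low_exponents_def)
    then have "real (sum e UNIV) \<le> d"
      using q by (simp add: d_def algebra_simps)
    then show ?thesis
      using x by (simp add: powr_realpow[symmetric] powr_mono')
  qed
  then have "real (card M) * x powr d \<le> (\<Sum>e\<in>M. x ^ sum e UNIV)"
    using sum_mono[of M "\<lambda>_. x powr d"] by simp
  also have "\<dots> \<le> (\<Sum>e\<in>P. x ^ sum e UNIV)"
    using x by (intro sum_mono2) (auto simp: P_def M_def low_exponents_def finite_PiE)
  finally have "real (card M) * x powr d \<le> (\<Sum>i<q. x ^ i) ^ CARD('n)"
    by (simp only: total)
  moreover have "x powr d = (x powr ((real q - 1) / 3)) ^ CARD('n)"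
    using x by (simp add: d_def powr_power mult.commute)
  ultimately show ?thesis
    using x by (simp add: M_def pos_le_divide_eq power_divide)
qed

lemma card_low_exponents_le_Gamma_q:
  assumes q: "1 \<le> q"
  shows "real (card (low_exponents q :: ('n::finite \<Rightarrow> nat) set)) \<le> Gamma_q q ^ CARD('n)"
proof -
  define f where "f x = (\<Sum>i<q. x ^ i) / x powr ((real q - 1) / 3)" for x :: real
  define r where "r = root CARD('n) (card (low_exponents q :: ('n \<Rightarrow> nat) set))"
  have r: "0 \<le> r" "r ^ CARD('n) = card (low_exponents q :: ('n \<Rightarrow> nat) set)"
    by (simp_all add: r_def)
  have "r \<le> f x" if x: "x \<in> {0<..<1}" for x
  proof -
    have "r ^ CARD('n) \<le> f x ^ CARD('n)"
      using card_low_exponents_le[of x q] x q r(2) by (simp add: f_def)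
    moreover have "0 \<le> f x"
      using x by (auto simp: f_def intro!: divide_nonneg_nonneg sum_nonneg)
    ultimately show ?thesis
      using r(1) by simp
  qed
  then have "r \<le> (INF x\<in>{0<..<1::real}. f x)"
    by (intro cINF_greatest) auto
  moreover have "Gamma_q q = (INF x\<in>{0<..<1::real}. f x)"
    using q by (simp add: Gamma_q_def J_fun_def f_def)
  ultimately show ?thesis
    using r by (metis power_mono)
qed

section \<open>Independent sets in graphs of bounded out-degree\<close>

lemma exists_low_degree_vertex:
  fixes Nb :: "'v \<Rightarrow> 'v set"
  assumes V: "finite V" "V \<noteq> {}" and Nb: "\<And>v. finite (Nb v) \<and> card (Nb v) \<le> D"
  shows "\<exists>v\<in>V. card {w\<in>V. w \<noteq> v \<and> (w \<in> Nb v \<or> v \<in> Nb w)} \<le> 2 * D"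
proof (rule ccontr)
  assume "\<not> ?thesis"
  then have "(\<Sum>v\<in>V. 2 * D + 1) \<le> (\<Sum>v\<in>V. card {w\<in>V. w \<noteq> v \<and> (w \<in> Nb v \<or> v \<in> Nb w)})"
    by (intro sum_mono) (auto simp: not_le Suc_le_eq)
  also have "\<dots> \<le> (\<Sum>v\<in>V. card (Nb v) + card {w\<in>V. v \<in> Nb w})"
  proof (intro sum_mono)
    fix v
    have "card {w\<in>V. w \<noteq> v \<and> (w \<in> Nb v \<or> v \<in> Nb w)} \<le> card (Nb v \<union> {w\<in>V. v \<in> Nb w})"
      using Nb V by (intro card_mono) auto
    also have "\<dots> \<le> card (Nb v) + card {w\<in>V. v \<in> Nb w}"
      by (rule card_Un_le)
    finally show "card {w\<in>V. w \<noteq> v \<and> (w \<in> Nb v \<or> v \<in> Nb w)} \<le> card (Nb v) + card {w\<in>V. v \<in> Nb w}" .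
  qed
  also have "\<dots> = (\<Sum>v\<in>V. card (Nb v)) + (\<Sum>w\<in>V. card {v\<in>V. v \<in> Nb w})"
  proof -
    have "(\<Sum>v\<in>V. card {w\<in>V. v \<in> Nb w}) = (\<Sum>v\<in>V. \<Sum>w\<in>V. of_bool (v \<in> Nb w))"
      using V(1) by (simp add: Int_def)
    also have "\<dots> = (\<Sum>w\<in>V. card {v\<in>V. v \<in> Nb w})"
      using V(1) by (subst sum.swap) (simp add: Int_def)
    finally show ?thesis
      by (simp add: sum.distrib)
  qed
  also have "\<dots> \<le> (\<Sum>v\<in>V. D) + (\<Sum>w\<in>V. D)"
  proof (intro add_mono sum_mono)
    fix w
    have "card {v\<in>V. v \<in> Nb w} \<le> card (Nb w)"
      using Nb[of w] by (intro card_mono) auto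
    then show "card {v\<in>V. v \<in> Nb w} \<le> D" "card (Nb w) \<le> D"
      using Nb[of w] by linarith+
  qed
  finally have "card V * (2 * D + 1) \<le> card V * (2 * D)"
    by simp
  then show False
    using V by simp
qed

text \<open>Greedy selection: a vertex of low total degree is kept and its neighbours discarded.\<close>

lemma exists_large_independent_set:
  fixes Nb :: "'v \<Rightarrow> 'v set"
  assumes V: "finite V" and Nb: "\<And>v. finite (Nb v) \<and> card (Nb v) \<le> D"
  shows "\<exists>I\<subseteq>V. (\<forall>x\<in>I. \<forall>y\<in>I. y \<in> Nb x \<longrightarrow> y = x) \<and> card V \<le> (2 * D + 1) * card I"
  using V
proof (induction V rule: finite_psubset_induct)
  case (psubset V)
  show ?case
  proof (cases "V = {}")
    case True
    then show ?thesis
      by auto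
  next
    case False
    from exists_low_degree_vertex[OF psubset.hyps False Nb] obtain v
      where v: "v \<in> V" and deg: "card {w\<in>V. w \<noteq> v \<and> (w \<in> Nb v \<or> v \<in> Nb w)} \<le> 2 * D" ..
    define C where "C = insert v {w\<in>V. w \<noteq> v \<and> (w \<in> Nb v \<or> v \<in> Nb w)}"
    have "V - C \<subset> V"
      using v by (auto simp: C_def)
    from psubset.IH[OF this] obtain I where I: "I \<subseteq> V - C" "\<forall>x\<in>I. \<forall>y\<in>I. y \<in> Nb x \<longrightarrow> y = x"
      "card (V - C) \<le> (2 * D + 1) * card I"
      by blast
    have v_I: "v \<notin> I" and fin_I: "finite I"
      using I(1) psubset.hyps finite_subset[of I V] by (auto simp: C_def)
    have far: "w \<notin> Nb v \<and> v \<notin> Nb w" if "w \<in> I" for w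
      using I(1) that by (auto simp: C_def)
    have "(V - C) \<union> C = V"
      using v by (auto simp: C_def)
    then have "card V \<le> card (V - C) + card C"
      using card_Un_le[of "V - C" C] by simp
    also have "\<dots> \<le> (2 * D + 1) * card I + (2 * D + 1)"
      using I(3) deg psubset.hyps by (simp add: C_def card_insert_if)
    also have "\<dots> = (2 * D + 1) * card (insert v I)"
      using v_I fin_I by simp
    finally have "card V \<le> (2 * D + 1) * card (insert v I)" .
    moreover have "\<forall>x\<in>insert v I. \<forall>y\<in>insert v I. y \<in> Nb x \<longrightarrow> y = x"
      using I(2) far by blast
    moreover have "insert v I \<subseteq> V"
      using I(1) v by blast
    ultimately show ?thesis
      by blast
  qed
qed

section \<open>Swapping two entries of a solution\<close>

text \<open>The shifts \<open>u\<close> for which moving \<open>x j1\<close> by \<open>u\<close> and \<open>x j2\<close> by \<open>-c *s u\<close> creates a linear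
  relation \<open>w\<close> with \<open>w j1 \<noteq> c * w j2\<close> (scaled so that the difference is \<open>1\<close>).\<close>

definition swap_obstructions :: "nat \<Rightarrow> nat \<Rightarrow> nat \<Rightarrow> 'a::field \<Rightarrow> (nat \<Rightarrow> 'a ^ 'n) \<Rightarrow> ('a ^ 'n) set" where
  "swap_obstructions k j1 j2 c x = {u. \<exists>w. w j1 - c * w j2 = 1 \<and> (\<Sum>j<k. w j *s x j) + u = 0}"

lemma card_swap_obstructions:
  fixes x :: "nat \<Rightarrow> 'a::{finite,field} ^ 'n"
  assumes j: "j1 < k" "j2 < k" "j1 \<noteq> j2"
  shows "finite (swap_obstructions k j1 j2 c x) \<and> card (swap_obstructions k j1 j2 c x) \<le> CARD('a) ^ (k - 1)"
proof -
  define lift where "lift \<beta> = \<beta>(j1 := 1 + c * \<beta> j2)" for \<beta> :: "nat \<Rightarrow> 'a"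
  define P where "P = ({..<k} - {j1}) \<rightarrow>\<^sub>E (UNIV :: 'a set)"
  have sub: "swap_obstructions k j1 j2 c x \<subseteq> (\<lambda>\<beta>. - (\<Sum>j<k. lift \<beta> j *s x j)) ` P"
  proof
    fix u assume "u \<in> swap_obstructions k j1 j2 c x"
    then obtain w where w: "w j1 - c * w j2 = 1" "(\<Sum>j<k. w j *s x j) + u = 0"
      by (auto simp: swap_obstructions_def)
    define \<beta> where "\<beta> = restrict w ({..<k} - {j1})"
    have "lift \<beta> j = w j" if "j < k" for j
      using that w(1) j by (auto simp: lift_def \<beta>_def algebra_simps)
    then have "u = - (\<Sum>j<k. lift \<beta> j *s x j)"
      using w(2) by (simp add: eq_neg_iff_add_eq_0 add.commute)
    moreover have "\<beta> \<in> P"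
      by (simp add: \<beta>_def P_def)
    ultimately show "u \<in> (\<lambda>\<beta>. - (\<Sum>j<k. lift \<beta> j *s x j)) ` P"
      by blast
  qed
  have P: "finite P" "card P = CARD('a) ^ (k - 1)"
    using j by (simp_all add: P_def finite_PiE card_PiE)
  have "card (swap_obstructions k j1 j2 c x) \<le> card ((\<lambda>\<beta>. - (\<Sum>j<k. lift \<beta> j *s x j)) ` P)"
    using sub P(1) by (intro card_mono) auto
  also have "\<dots> \<le> CARD('a) ^ (k - 1)"
    using card_image_le[OF P(1)] P(2) by auto
  finally show ?thesis
    using sub P(1) finite_subset by blast
qed

lemma sum_scaled_pair_shift:
  fixes x :: "nat \<Rightarrow> 'a::field ^ 'n"
  assumes j: "j1 < k" "j2 < k" "j1 \<noteq> j2"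
  shows "(\<Sum>j<k. w j *s (x(j1 := x j1 + u, j2 := x j2 - c *s u)) j)
    = (\<Sum>j<k. w j *s x j) + (w j1 - c * w j2) *s u"
proof -
  let ?y = "x(j1 := x j1 + u, j2 := x j2 - c *s u)"
  have "(\<Sum>j<k. w j *s ?y j) $ t
      = (\<Sum>j<k. w j * x j $ t + (if j = j1 then w j1 * u $ t else 0) - (if j = j2 then w j2 * (c * u $ t) else 0))"
    for t
    unfolding sum_component using j by (intro sum.cong) (auto simp: algebra_simps)
  also have "\<dots> t = (\<Sum>j<k. w j * x j $ t) + w j1 * u $ t - w j2 * (c * u $ t)" for t
    using j by (simp add: sum.distrib sum_subtractf)
  finally show ?thesis
    by (simp add: vec_eq_iff algebra_simps)
qed

lemma swap_pair_solution:
  fixes x :: "nat \<Rightarrow> 'a::field ^ 'n"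
  assumes j: "j1 < k" "j2 < k" "j1 \<noteq> j2"
    and c: "c \<noteq> 0" "\<forall>i<m. A i j1 = c * A i j2"
    and sol: "is_solution A m k x"
    and free: "u \<notin> swap_obstructions k j1 j2 c x"
  defines "y \<equiv> x(j1 := x j1 + u, j2 := x j2 - c *s u)"
  shows "is_solution A m k y \<and> Ann_bal k y \<subseteq> Ann_bal k x \<and> (\<forall>w\<in>Ann_bal k y. \<not> breaks A m j1 j2 w)"
proof -
  have shift: "(\<Sum>j<k. w j *s y j) = (\<Sum>j<k. w j *s x j) + (w j1 - c * w j2) *s u" for w
    unfolding y_def by (rule sum_scaled_pair_shift[OF j])
  have balanced: "w j1 = c * w j2" if "(\<Sum>j<k. w j *s y j) = 0" for w
  proof (rule ccontr)
    assume "w j1 \<noteq> c * w j2"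
    then have d: "w j1 - c * w j2 \<noteq> 0"
      by simp
    define w' where "w' j = w j / (w j1 - c * w j2)" for j
    have "(\<Sum>j<k. w j * x j $ t) + (w j1 - c * w j2) * u $ t = 0" for t
      using arg_cong[OF that[unfolded shift], of "\<lambda>v. v $ t"] by (simp add: algebra_simps)
    moreover have "(\<Sum>j<k. w' j * x j $ t) + u $ t
        = ((\<Sum>j<k. w j * x j $ t) + (w j1 - c * w j2) * u $ t) / (w j1 - c * w j2)" for t
      using d by (simp add: w'_def sum_divide_distrib add_divide_distrib)
    ultimately have "(\<Sum>j<k. w' j *s x j) + u = 0"
      by (simp add: vec_eq_iff)
    moreover have "w' j1 - c * w' j2 = 1"
      using d by (simp add: w'_def diff_divide_distrib[symmetric])
    ultimately show False
      using free by (auto simp: swap_obstructions_def)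
  qed
  have "is_solution A m k y"
    using sol c(2) by (simp add: is_solution_def shift)
  moreover have "Ann_bal k y \<subseteq> Ann_bal k x"
  proof
    fix w assume w: "w \<in> Ann_bal k y"
    then have "(\<Sum>j<k. w j *s y j) = 0"
      by (simp add: Ann_bal_def)
    moreover from this have "w j1 = c * w j2"
      by (rule balanced)
    ultimately have "(\<Sum>j<k. w j *s x j) = 0"
      by (simp add: shift)
    then show "w \<in> Ann_bal k x"
      using w by (simp add: Ann_bal_def)
  qed
  moreover have "\<not> breaks A m j1 j2 w" if "w \<in> Ann_bal k y" for w
  proof -
    have "w j1 = c * w j2"
      using that by (intro balanced) (simp add: Ann_bal_def)
    then show ?thesis
      unfolding breaks_def col_equiv_def not_not using c
      by (intro exI[of _ c]) (simp add: append_row_def less_Suc_eq)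
  qed
  ultimately show ?thesis
    by blast
qed

lemma card_le_of_obstructed_sums:
  fixes a b :: "nat \<Rightarrow> 'a::{finite,field} ^ 'n" and B :: "nat \<Rightarrow> ('a ^ 'n) set"
  assumes inj: "inj_on a {..<L}" "inj_on b {..<L}"
    and B: "\<And>i. finite (B i) \<and> card (B i) \<le> D"
    and obstructed: "\<And>i i1 i2. i < L \<Longrightarrow> i1 < L \<Longrightarrow> i2 < L \<Longrightarrow>
      c *s a i1 + b i2 = c *s a i + b i \<Longrightarrow> a i1 - a i \<in> B i"
  shows "L \<le> (2 * D + 1) * (3 * card (low_exponents CARD('a) :: ('n \<Rightarrow> nat) set))"
proof -
  define Nb where "Nb i = {i1. i1 < L \<and> a i1 - a i \<in> B i}" for i
  have "finite (Nb i) \<and> card (Nb i) \<le> D" for i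
  proof -
    have "inj_on (\<lambda>i1. a i1 - a i) (Nb i)"
      using inj(1) by (auto simp: Nb_def inj_on_def)
    then have "card (Nb i) \<le> card (B i)"
      using B by (intro card_inj_on_le) (auto simp: Nb_def)
    then show ?thesis
      using B[of i] by (simp add: Nb_def)
  qed
  then obtain I where I: "I \<subseteq> {..<L}" "\<forall>x\<in>I. \<forall>y\<in>I. y \<in> Nb x \<longrightarrow> y = x"
    "card {..<L} \<le> (2 * D + 1) * card I"
    using exists_large_independent_set[of "{..<L}" Nb D] by blast
  have "card I \<le> 3 * card (low_exponents CARD('a) :: ('n \<Rightarrow> nat) set)"
  proof (rule tricolored_sum_free_card_le)
    show "finite I"
      using I(1) finite_subset by blast
    fix x y z assume xyz: "x \<in> I" "y \<in> I" "z \<in> I"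
    show "c *s a x + b y + - (c *s a z + b z) = 0 \<longleftrightarrow> x = y \<and> y = z"
    proof
      assume "c *s a x + b y + - (c *s a z + b z) = 0"
      then have eq: "c *s a x + b y = c *s a z + b z"
        by (simp add: algebra_simps)
      then have "x \<in> Nb z"
        using obstructed[of z x y] xyz I(1) by (auto simp: Nb_def)
      then have "x = z"
        using I(2) xyz by blast
      then show "x = y \<and> y = z"
        using eq inj(2) xyz I(1) by (auto dest: inj_onD)
    qed simp
  qed
  then have "(2 * D + 1) * card I \<le> (2 * D + 1) * (3 * card (low_exponents CARD('a) :: ('n \<Rightarrow> nat) set))"
    by (rule mult_le_mono2)
  then show ?thesis
    using I(3) by simp
qed

lemma four_power_bound:
  fixes q k L M :: nat and G :: real
  assumes q: "2 \<le> q" and k: "2 \<le> k" and M: "0 < M" "real M \<le> G"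
    and L: "L \<le> (2 * q ^ (k - 1) + 1) * (3 * M)"
  shows "real L < 4 * real q ^ k * G"
proof -
  define D where "D = q ^ (k - 1)"
  have D: "2 \<le> D"
    using q k self_le_power[of q "k - 1"] by (simp add: D_def)
  have "k = Suc (k - 1)"
    using k by simp
  then have qk: "real q ^ k = real q * real D"
    unfolding D_def by (metis of_nat_power power_Suc)
  have "real L \<le> real ((2 * D + 1) * (3 * M))"
    using L unfolding D_def of_nat_le_iff .
  also have "\<dots> = (2 * real D + 1) * 3 * real M"
    by (simp add: algebra_simps)
  also have "\<dots> < 4 * real q * real D * real M"
  proof -
    have "(2 * real D + 1) * 3 < 8 * real D"
      using D by simp
    also have "\<dots> \<le> 4 * real q * real D"
      using q by (intro mult_right_mono) auto
    finally show ?thesis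
      using M(1) by simp
  qed
  also have "\<dots> \<le> 4 * real q * real D * G"
    using M(2) by (intro mult_left_mono) auto
  finally show ?thesis
    by (simp add: qk)
qed

lemma inj_on_entry_of_disjoint_sols:
  assumes "\<forall>i<L. \<forall>i'<L. i \<noteq> i' \<longrightarrow> disjoint_sols k (x i) (x i')" and "j < k"
  shows "inj_on (\<lambda>i. x i j) {..<L}"
  using assms by (auto intro!: inj_onI simp: disjoint_sols_def)

theorem lemma6p4:
  fixes A :: "nat \<Rightarrow> nat \<Rightarrow> 'a::{finite,field}"
    and m k L j1 j2 :: nat
    and x :: "nat \<Rightarrow> nat \<Rightarrow> 'a ^ 'n"
  assumes RC: "type_RC A m k"
    and nondeg: "non_degenerate A m k"
    and irred: "irreducible_sys A m k"
    and j1: "j1 < k" and j2: "j2 < k" and j12: "j1 \<noteq> j2"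
    and same_class: "col_equiv A m j1 j2"
    and sols: "\<forall>i<L. is_solution A m k (x i)"
    and disj: "\<forall>i<L. \<forall>i'<L. i \<noteq> i' \<longrightarrow> disjoint_sols k (x i) (x i')"
    and large: "real L \<ge> 4 * real CARD('a) ^ k * Gamma_q CARD('a) ^ CARD('n)"
  shows "\<exists>i<L. \<exists>y :: nat \<Rightarrow> 'a ^ 'n.
           is_solution A m k y \<and>
           (\<forall>j<k. j \<noteq> j1 \<and> j \<noteq> j2 \<longrightarrow> y j = x i j) \<and>
           (\<forall>j\<in>{j1, j2}. \<exists>i'<L. y j = x i' j) \<and>
           Ann_bal k y \<subseteq> Ann_bal k (x i) \<and>
           (\<forall>b\<in>Ann_bal k y. \<not> breaks A m j1 j2 b)"
proof (rule ccontr)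
  assume no_swap: "\<not> ?thesis"
  obtain c where c: "c \<noteq> 0" "\<forall>i<m. A i j1 = c * A i j2"
    using same_class unfolding col_equiv_def by blast
  have obstructed: "x i1 j1 - x i j1 \<in> swap_obstructions k j1 j2 c (x i)"
    if i: "i < L" "i1 < L" "i2 < L" and eq: "c *s x i1 j1 + x i2 j2 = c *s x i j1 + x i j2" for i i1 i2
  proof (rule ccontr)
    define y where "y = (x i)(j1 := x i1 j1, j2 := x i2 j2)"
    have "x i2 j2 $ t = x i j2 $ t - c * (x i1 j1 $ t - x i j1 $ t)" for t
      using arg_cong[OF eq, of "\<lambda>v. v $ t"] by simp algebra
    then have "x i2 j2 = x i j2 - c *s (x i1 j1 - x i j1)"
      by (simp add: vec_eq_iff algebra_simps)
    then have y_shift: "y = (x i)(j1 := x i j1 + (x i1 j1 - x i j1), j2 := x i j2 - c *s (x i1 j1 - x i j1))"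
      by (simp add: y_def)
    assume free: "x i1 j1 - x i j1 \<notin> swap_obstructions k j1 j2 c (x i)"
    have "is_solution A m k y \<and> Ann_bal k y \<subseteq> Ann_bal k (x i)
        \<and> (\<forall>w\<in>Ann_bal k y. \<not> breaks A m j1 j2 w)"
      unfolding y_shift by (rule swap_pair_solution[OF j1 j2 j12 c sols[rule_format, OF i(1)] free])
    moreover have "(\<forall>j<k. j \<noteq> j1 \<and> j \<noteq> j2 \<longrightarrow> y j = x i j) \<and> (\<forall>j\<in>{j1, j2}. \<exists>i'<L. y j = x i' j)"
      using i j12 by (auto simp: y_def)
    ultimately show False
      using no_swap i(1) by blast
  qed
  have L: "L \<le> (2 * CARD('a) ^ (k - 1) + 1) * (3 * card (low_exponents CARD('a) :: ('n \<Rightarrow> nat) set))"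
    using inj_on_entry_of_disjoint_sols[OF disj j1] inj_on_entry_of_disjoint_sols[OF disj j2]
      card_swap_obstructions[OF j1 j2 j12] obstructed
    by (rule card_le_of_obstructed_sums[where B = "\<lambda>i. swap_obstructions k j1 j2 c (x i)"])
  have k: "2 \<le> k"
    using j1 j2 j12 by linarith
  have M: "0 < card (low_exponents CARD('a) :: ('n \<Rightarrow> nat) set)"
    by (rule card_low_exponents_pos) simp
  have "real L < 4 * real CARD('a) ^ k * Gamma_q CARD('a) ^ CARD('n)"
    using four_power_bound[OF finite_field_card_ge_2 k M card_low_exponents_le_Gamma_q L] by simp
  then show False
    using large by simp
qed

end
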